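(* Let $S$ be a numerical semigroup minimally generated by $n_1<\cdots<n_e$, with conductor $c$. Let $m\ge 2c-1$, let $M=\{m=m_1<\cdots<m_r\}$ be an $(S,m,r)$-amenable set, and let $L=M\cap[m,m+n_e)$. Then $\mathrm D(M)=(M\setminus L)\cup\mathrm D(L)$, and moreover $\sharp\mathrm D(M)=\sharp(M\setminus L)+\sharp\mathrm D(L)$.
   Context: A numerical semigroup is a submonoid of $\mathbb N$ with finite complement; its conductor $c$ is the least element of $S$ such that $c+n\in S$ for all $n\in\mathbb N$. For $x\in S$, $\mathrm D(x)=\{\alpha\in S\mid x-\alpha\in S\}$ and for $A\subseteq S$, $\mathrm D(A)=\bigcup_{x\in A}\mathrm D(x)$. A set $M=\{m_1<\cdots<m_r\}\subseteq S$ with $2c-1\le m=m_1$ is $(S,m,r)$-amenable if $\mathrm D(m_i)\cap[m,\infty)\subseteq M$ for all $i$. *)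

theory Defs
  imports Main
begin

definition numerical_semigroup :: "nat set \<Rightarrow> bool" where
  "numerical_semigroup S \<longleftrightarrow> 0 \<in> S \<and> (\<forall>x\<in>S. \<forall>y\<in>S. x + y \<in> S) \<and> finite (UNIV - S)"

definition minimal_generators :: "nat set \<Rightarrow> nat set" where
  "minimal_generators S = {x \<in> S. x \<noteq> 0 \<and>
     \<not> (\<exists>a\<in>S. \<exists>b\<in>S. a \<noteq> 0 \<and> b \<noteq> 0 \<and> x = a + b)}"

definition conductor :: "nat set \<Rightarrow> nat" where
  "conductor S = (LEAST c. c \<in> S \<and> (\<forall>n. c + n \<in> S))"

definition D :: "nat set \<Rightarrow> nat \<Rightarrow> nat set" where
  "D S x = {a \<in> S. a \<le> x \<and> x - a \<in> S}"

definition D_set :: "nat set \<Rightarrow> nat set \<Rightarrow> nat set" where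
  "D_set S A = (\<Union>x\<in>A. D S x)"

definition amenable :: "nat set \<Rightarrow> nat \<Rightarrow> nat \<Rightarrow> nat set \<Rightarrow> bool" where
  "amenable S m r M \<longleftrightarrow> M \<subseteq> S \<and> finite M \<and> card M = r \<and> M \<noteq> {} \<and> Min M = m \<and>
     2 * conductor S - 1 \<le> m \<and> (\<forall>x\<in>M. D S x \<inter> {m..} \<subseteq> M)"

end

theory Submission
  imports Defs
begin

text \<open>Let \<open>x \<in> M\<close> with \<open>x \<ge> m + n\<^sub>e\<close> and \<open>a \<in> D(x)\<close>, \<open>a < m\<close>. Then \<open>x - a\<close> is a nonzero element
  of \<open>S\<close>, so it is \<open>g + s'\<close> with \<open>s' \<in> S\<close> for some minimal generator \<open>g \<le> n\<^sub>e\<close>, and \<open>y = x - g\<close> lies in \<open>D(x)\<close> and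
  in \<open>[m, \<infinity>)\<close>, hence in \<open>M\<close> by amenability, while still \<open>a \<in> D(y)\<close>. Descending in this way
  ends in \<open>L\<close>, so \<open>D(M) = (M \<setminus> L) \<union> D(L)\<close>; the union is disjoint because \<open>D(L) \<subseteq> [0, m + n\<^sub>e)\<close>
  while \<open>M \<setminus> L \<subseteq> [m + n\<^sub>e, \<infinity>)\<close>.\<close>

lemma exists_minimal_generator_summand:
  assumes zero: "0 \<in> S" and add: "\<And>x y. x \<in> S \<Longrightarrow> y \<in> S \<Longrightarrow> x + y \<in> S"
  shows "s \<in> S \<Longrightarrow> s \<noteq> 0 \<Longrightarrow> \<exists>g\<in>minimal_generators S. g \<le> s \<and> s - g \<in> S"
proof (induction s rule: less_induct)
  case (less s)
  show ?case
  proof (cases "s \<in> minimal_generators S")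
    case True
    then show ?thesis using zero by auto
  next
    case False
    then obtain a b where ab: "a \<in> S" "b \<in> S" "a \<noteq> 0" "b \<noteq> 0" "s = a + b"
      using less.prems unfolding minimal_generators_def by auto
    then obtain g where g: "g \<in> minimal_generators S" "g \<le> a" "a - g \<in> S"
      using less.IH[of a] by auto
    have "s - g = (a - g) + b" using ab g by auto
    then have "s - g \<in> S" using add[OF g(3) ab(2)] by simp
    moreover have "g \<le> s" using g ab by simp
    ultimately show ?thesis using g(1) by blast
  qed
qed

lemma finite_minimal_generators:
  assumes "numerical_semigroup S"
  shows "finite (minimal_generators S)"
proof -
  have "finite (UNIV - S)" using assms unfolding numerical_semigroup_def by simp
  then obtain c where "\<forall>x\<in>UNIV - S. x < c"
    unfolding finite_nat_set_iff_bounded by blast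
  then have c: "\<And>n. n \<ge> c \<Longrightarrow> n \<in> S" by (meson DiffI UNIV_I not_le)
  have "x < 2 * c + 2" if x: "x \<in> minimal_generators S" for x
  proof (rule ccontr)
    assume "\<not> x < 2 * c + 2"
    then have "c + 1 \<in> S" "x - (c + 1) \<in> S" "x = (c + 1) + (x - (c + 1))" "x - (c + 1) \<noteq> 0"
      using c by auto
    moreover have "\<not> (\<exists>a\<in>S. \<exists>b\<in>S. a \<noteq> 0 \<and> b \<noteq> 0 \<and> x = a + b)"
      using x unfolding minimal_generators_def by simp
    ultimately show False by (meson add_eq_0_iff_both_eq_0 one_neq_zero)
  qed
  then show ?thesis unfolding finite_nat_set_iff_bounded by blast
qed

lemma self_in_D: "0 \<in> S \<Longrightarrow> x \<in> S \<Longrightarrow> x \<in> D S x"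
  unfolding D_def by auto

lemma finite_D_set: "finite A \<Longrightarrow> finite (D_set S A)"
  unfolding D_set_def D_def by (auto intro: finite_subset[of _ "{..Max A}"] order_trans[OF _ Max_ge])

lemma Un_D_set_subset_D_set: "0 \<in> S \<Longrightarrow> A \<subseteq> S \<Longrightarrow> A \<union> D_set S B \<subseteq> D_set S (A \<union> B)"
  unfolding D_set_def using self_in_D by blast

lemma D_descent_by_generator:
  assumes zero: "0 \<in> S" and add: "\<And>x y. x \<in> S \<Longrightarrow> y \<in> S \<Longrightarrow> x + y \<in> S"
    and a: "a \<in> D S x" and "a < x"
  obtains g where "g \<in> minimal_generators S" "g \<noteq> 0" "g \<le> x - a"
    "x - g \<in> D S x" "a \<in> D S (x - g)"
proof -
  have aS: "a \<in> S" "a \<le> x" "x - a \<in> S" using a unfolding D_def by auto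
  obtain g where g: "g \<in> minimal_generators S" "g \<le> x - a" "x - a - g \<in> S"
    using exists_minimal_generator_summand[OF zero add, of "x - a"] aS \<open>a < x\<close> by auto
  have gS: "g \<in> S" "g \<noteq> 0" using g(1) unfolding minimal_generators_def by auto
  have "x - g = a + (x - a - g)" using g aS by auto
  then have "x - g \<in> S" using add[OF aS(1) g(3)] by simp
  moreover have "x - (x - g) = g" "x - g \<le> x" using g aS by auto
  ultimately have "x - g \<in> D S x" using gS(1) unfolding D_def by simp
  moreover have "a \<in> D S (x - g)"
  proof -
    have "a \<le> x - g" "x - g - a = x - a - g" using aS g by auto
    then show ?thesis using aS(1) g(3) unfolding D_def by simp
  qed
  ultimately show thesis using that g(1,2) gS(2) by blast
qed

lemma D_subset_D_set_lower_window:
  assumes zero: "0 \<in> S" and add: "\<And>x y. x \<in> S \<Longrightarrow> y \<in> S \<Longrightarrow> x + y \<in> S"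
    and bound: "\<And>g. g \<in> minimal_generators S \<Longrightarrow> g \<le> b"
    and ge: "\<And>x. x \<in> M \<Longrightarrow> m \<le> x"
    and closed: "\<And>x. x \<in> M \<Longrightarrow> D S x \<inter> {m..} \<subseteq> M"
  shows "x \<in> M \<Longrightarrow> D S x \<subseteq> (M - M \<inter> {m..<m + b}) \<union> D_set S (M \<inter> {m..<m + b})"
proof (induction x rule: less_induct)
  case (less x)
  let ?L = "M \<inter> {m..<m + b}"
  show ?case
  proof (cases "x < m + b")
    case True
    then have "x \<in> ?L" using less.prems ge by auto
    then show ?thesis unfolding D_set_def by auto
  next
    case False
    show ?thesis
    proof
      fix a assume a: "a \<in> D S x"
      show "a \<in> (M - ?L) \<union> D_set S ?L"
      proof (cases "m \<le> a")
        case True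
        then have "a \<in> M" using closed[OF less.prems] a by auto
        moreover have "a \<in> S" using a unfolding D_def by simp
        then have "a \<in> D S a" by (rule self_in_D[OF zero])
        ultimately show ?thesis unfolding D_set_def by blast
      next
        case False
        with \<open>\<not> x < m + b\<close> have "a < x" by simp
        then obtain g where g: "g \<in> minimal_generators S" "g \<noteq> 0"
          "x - g \<in> D S x" "a \<in> D S (x - g)"
          using D_descent_by_generator[OF zero add a] by blast
        have "m \<le> x - g" using bound[OF g(1)] \<open>\<not> x < m + b\<close> by simp
        then have "x - g \<in> M" using closed[OF less.prems] g(3) by blast
        moreover have "x - g < x" using g(2) bound[OF g(1)] \<open>\<not> x < m + b\<close> by simp
        ultimately show ?thesis using less.IH g(4) by blast
      qed
    qed
  qed
qed

lemma disjoint_window_D_set: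
  assumes "\<And>x. x \<in> M \<Longrightarrow> m \<le> x"
  shows "(M - M \<inter> {m..<m + b}) \<inter> D_set S (M \<inter> {m..<m + b}) = {}"
  using assms unfolding D_set_def D_def by fastforce

theorem lemma3p10:
  fixes S M :: "nat set" and m r :: nat
  assumes "numerical_semigroup S"
    and "2 * conductor S - 1 \<le> m"
    and "amenable S m r M"
  shows "D_set S M = (M - M \<inter> {m..<m + Max (minimal_generators S)})
                      \<union> D_set S (M \<inter> {m..<m + Max (minimal_generators S)})
     \<and> card (D_set S M) = card (M - M \<inter> {m..<m + Max (minimal_generators S)})
                      + card (D_set S (M \<inter> {m..<m + Max (minimal_generators S)}))"
proof -
  define L where "L = M \<inter> {m..<m + Max (minimal_generators S)}"
  have zero: "0 \<in> S" and add: "\<And>x y. x \<in> S \<Longrightarrow> y \<in> S \<Longrightarrow> x + y \<in> S"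
    using assms(1) unfolding numerical_semigroup_def by auto
  have MS: "M \<subseteq> S" and finM: "finite M" and closed: "\<And>x. x \<in> M \<Longrightarrow> D S x \<inter> {m..} \<subseteq> M"
    and ge: "\<And>x. x \<in> M \<Longrightarrow> m \<le> x"
    using assms(3) unfolding amenable_def by auto
  have bound: "\<And>g. g \<in> minimal_generators S \<Longrightarrow> g \<le> Max (minimal_generators S)"
    using finite_minimal_generators[OF assms(1)] by simp
  have "D S x \<subseteq> (M - L) \<union> D_set S L" if "x \<in> M" for x
    using D_subset_D_set_lower_window[OF zero add bound ge closed that] unfolding L_def .
  then have "D_set S M \<subseteq> (M - L) \<union> D_set S L"
    unfolding D_set_def[of S M] by blast
  moreover have "(M - L) \<union> D_set S L \<subseteq> D_set S M"
  proof -
    have "(M - L) \<union> L = M" unfolding L_def by blast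
    moreover have "M - L \<subseteq> S" using MS by blast
    ultimately show ?thesis using Un_D_set_subset_D_set[OF zero, of "M - L" L] by simp
  qed
  ultimately have eq: "D_set S M = (M - L) \<union> D_set S L" by (rule subset_antisym)
  have "finite L" unfolding L_def using finM by simp
  have "card ((M - L) \<union> D_set S L) = card (M - L) + card (D_set S L)"
  proof (rule card_Un_disjoint)
    show "finite (M - L)" using finM by simp
    show "finite (D_set S L)" using \<open>finite L\<close> by (rule finite_D_set)
    show "(M - L) \<inter> D_set S L = {}" unfolding L_def by (rule disjoint_window_D_set[OF ge])
  qed
  with eq show ?thesis unfolding L_def by simp
qed

end
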